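(* Let $T$ be a reducing triangulation (possibly infinite, e.g. lifted to a covering space) of an oriented surface without boundary. Let $C$ and $C'$ be two disjoint simple closed walks in $T$ that together bound an annulus. Then $C$ and $C'$ are not both reduced closed walks.
   Context: A triangulation is an embedded graph whose faces are all open disks bounded by three edge-sides. A reducing triangulation $T$ of an oriented surface without boundary is a triangulation in which every vertex has degree at least $8$ and each triangle is colored red or blue so that adjacent triangles have different colors. It may be infinite, for instance when lifted to a covering space together with its colors. Suppose a walk traverses a directed edge $e$ into a vertex $v$ and then leaves $v$ along a directed edge $e'$. This occurrence of $v$ makes a $k$-turn ($k\ge 0$) if exactly $k$ triangles around $v$ lie to the left of the length-two walk $e\,e'$, between $e$ and $e'$ in the cyclic order around $v$. It makes a $-k$-turn ($k\ge 1$) if exactly $k$ triangles lie to its right. A turn is named by an integer in $\{-3,\dots,3\}$ when possible, which is unambiguous since degrees are at least $8$; otherwise it is named by the positive integer. A $k_b$-turn (resp. $k_r$-turn) is a $k$-turn in which the triangle to the left of $e$ is blue (resp. red). A bad turn is a $0$-turn, a $1$-turn, a $-1$-turn, a $2_r$-turn or a $-2_r$-turn. A closed walk, whose vertices are cyclically ordered and all interior, is a reduced closed walk if none of its vertices makes a bad turn, not all of its vertices make $3_r$-turns, and not all of its vertices make $-3_b$-turns. Reversing a closed walk preserves reducedness. *)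

theory Defs
  imports Main
begin

(* Combinatorial model of an (oriented, possibly infinite) triangulated surface
   without boundary, as a combinatorial map on a type 'd of darts
   (= directed edges / edge-sides):
     alpha d  : the reverse dart of d (fixed-point-free involution),
     phi d    : the next dart along the boundary of the triangle to the LEFT of d
                (faces are traversed counterclockwise; the triangle to the left of
                d is the phi-orbit of d; phi^3 = id, phi has no fixed points),
     rot      : phi o alpha, the (clockwise) rotation of the darts leaving a vertex.
   The tail vertex of a dart d is its rot-orbit; the head of d is the tail of alpha d. *)

datatype color = Red | Blue

definition rot :: "('d \<Rightarrow> 'd) \<Rightarrow> ('d \<Rightarrow> 'd) \<Rightarrow> 'd \<Rightarrow> 'd" where
  "rot alpha phi = phi \<circ> alpha"

(* the vertex at the tail of dart d, represented as the set of darts leaving it *)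
definition vtx :: "('d \<Rightarrow> 'd) \<Rightarrow> 'd \<Rightarrow> 'd set" where
  "vtx sigma d = {(sigma ^^ k) d | k. True}"

definition deg :: "('d \<Rightarrow> 'd) \<Rightarrow> 'd \<Rightarrow> nat" where
  "deg sigma d = card (vtx sigma d)"

definition reducing_triangulation ::
  "('d \<Rightarrow> 'd) \<Rightarrow> ('d \<Rightarrow> 'd) \<Rightarrow> ('d \<Rightarrow> color) \<Rightarrow> bool" where
  "reducing_triangulation alpha phi col \<longleftrightarrow>
     (\<forall>d. alpha (alpha d) = d \<and> alpha d \<noteq> d) \<and>
     (\<forall>d. phi (phi (phi d)) = d \<and> phi d \<noteq> d) \<and>
     (\<forall>d. finite (vtx (rot alpha phi) d) \<and> deg (rot alpha phi) d \<ge> 8) \<and>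
     (\<forall>d. col (phi d) = col d \<and> col (alpha d) \<noteq> col d)"

definition closed_walk :: "('d \<Rightarrow> 'd) \<Rightarrow> ('d \<Rightarrow> 'd) \<Rightarrow> 'd list \<Rightarrow> bool" where
  "closed_walk alpha phi ds \<longleftrightarrow> ds \<noteq> [] \<and>
     (\<forall>i < length ds. ds ! ((i + 1) mod length ds) \<in> vtx (rot alpha phi) (alpha (ds ! i)))"

definition simple_walk :: "('d \<Rightarrow> 'd) \<Rightarrow> ('d \<Rightarrow> 'd) \<Rightarrow> 'd list \<Rightarrow> bool" where
  "simple_walk alpha phi ds \<longleftrightarrow>
     (\<forall>i < length ds. \<forall>j < length ds. i \<noteq> j \<longrightarrow>
        vtx (rot alpha phi) (ds ! i) \<noteq> vtx (rot alpha phi) (ds ! j))"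

definition disjoint_walks :: "('d \<Rightarrow> 'd) \<Rightarrow> ('d \<Rightarrow> 'd) \<Rightarrow> 'd list \<Rightarrow> 'd list \<Rightarrow> bool" where
  "disjoint_walks alpha phi C C' \<longleftrightarrow>
     (\<forall>i < length C. \<forall>j < length C'. vtx (rot alpha phi) (C ! i) \<noteq> vtx (rot alpha phi) (C' ! j))"

(* number of triangles to the LEFT of the length-two walk e e' at the head of e:
   the darts leaving the head of e are rot^k (alpha e), k = 0 .. deg-1, clockwise,
   and between rot^j (alpha e) and rot^(j+1) (alpha e) lies exactly one triangle *)
definition lturn :: "('d \<Rightarrow> 'd) \<Rightarrow> ('d \<Rightarrow> 'd) \<Rightarrow> 'd \<Rightarrow> 'd \<Rightarrow> nat" where
  "lturn alpha phi e e' = (LEAST k. (rot alpha phi ^^ k) (alpha e) = e')"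

(* number of triangles to the RIGHT *)
definition rturn :: "('d \<Rightarrow> 'd) \<Rightarrow> ('d \<Rightarrow> 'd) \<Rightarrow> 'd \<Rightarrow> 'd \<Rightarrow> nat" where
  "rturn alpha phi e e' = deg (rot alpha phi) (alpha e) - lturn alpha phi e e'"

(* bad turn: 0-turn, 1-turn, -1-turn, 2_r-turn, -2_r-turn;
   the triangle to the left of e has colour col e *)
definition bad_turn :: "('d \<Rightarrow> 'd) \<Rightarrow> ('d \<Rightarrow> 'd) \<Rightarrow> ('d \<Rightarrow> color) \<Rightarrow> 'd \<Rightarrow> 'd \<Rightarrow> bool" where
  "bad_turn alpha phi col e e' \<longleftrightarrow>
     lturn alpha phi e e' = 0 \<or> lturn alpha phi e e' = 1 \<or> rturn alpha phi e e' = 1 \<or>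
     (lturn alpha phi e e' = 2 \<and> col e = Red) \<or> (rturn alpha phi e e' = 2 \<and> col e = Red)"

definition turn_3r :: "('d \<Rightarrow> 'd) \<Rightarrow> ('d \<Rightarrow> 'd) \<Rightarrow> ('d \<Rightarrow> color) \<Rightarrow> 'd \<Rightarrow> 'd \<Rightarrow> bool" where
  "turn_3r alpha phi col e e' \<longleftrightarrow> lturn alpha phi e e' = 3 \<and> col e = Red"

definition turn_m3b :: "('d \<Rightarrow> 'd) \<Rightarrow> ('d \<Rightarrow> 'd) \<Rightarrow> ('d \<Rightarrow> color) \<Rightarrow> 'd \<Rightarrow> 'd \<Rightarrow> bool" where
  "turn_m3b alpha phi col e e' \<longleftrightarrow>
     lturn alpha phi e e' \<noteq> 0 \<and> rturn alpha phi e e' = 3 \<and> col e = Blue"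

definition reduced_closed_walk ::
  "('d \<Rightarrow> 'd) \<Rightarrow> ('d \<Rightarrow> 'd) \<Rightarrow> ('d \<Rightarrow> color) \<Rightarrow> 'd list \<Rightarrow> bool" where
  "reduced_closed_walk alpha phi col ds \<longleftrightarrow> closed_walk alpha phi ds \<and>
     (\<forall>i < length ds. \<not> bad_turn alpha phi col (ds ! i) (ds ! ((i + 1) mod length ds))) \<and>
     \<not> (\<forall>i < length ds. turn_3r alpha phi col (ds ! i) (ds ! ((i + 1) mod length ds))) \<and>
     \<not> (\<forall>i < length ds. turn_m3b alpha phi col (ds ! i) (ds ! ((i + 1) mod length ds)))"

(* C and C' together bound an annulus: there is a finite set F of darts, closed under
   phi (i.e. a finite union of triangles), connected through shared edges, whose
   boundary edges (edges with exactly one side in F) are exactly the edges of C and C',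
   and whose Euler characteristic V - E + F is 0.  (With C, C' simple and disjoint this
   region is a compact orientable surface with two boundary circles; chi = 0 and
   connectedness make it an annulus.) *)
definition bound_annulus :: "('d \<Rightarrow> 'd) \<Rightarrow> ('d \<Rightarrow> 'd) \<Rightarrow> 'd list \<Rightarrow> 'd list \<Rightarrow> bool" where
  "bound_annulus alpha phi C C' \<longleftrightarrow> (\<exists>F. finite F \<and> (\<forall>d\<in>F. phi d \<in> F) \<and>
     (\<forall>x\<in>F. \<forall>y\<in>F. (x, y) \<in> {(a, b). a \<in> F \<and> b \<in> F \<and> (b = phi a \<or> b = alpha a)}\<^sup>*) \<and>
     (\<forall>x. ((x \<in> F) \<longleftrightarrow> (alpha x \<notin> F)) \<longleftrightarrow>
          x \<in> set C \<union> alpha ` set C \<union> set C' \<union> alpha ` set C') \<and>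
     int (card (vtx (rot alpha phi) ` F)) - int (card ((\<lambda>d. {d, alpha d}) ` F))
       + int (card ((\<lambda>d. {d, phi d, phi (phi d)}) ` F)) = 0)"

end

theory Submission
  imports Defs
begin

text \<open>Let \<open>F\<close> be the annulus, a finite union of triangles bounded by the edges of \<open>C\<close> and \<open>C'\<close>.
  At a vertex where a walk makes no bad turn, \<open>F\<close> fills a wedge of \<open>m \<ge> 2\<close> triangles at that vertex
  (\<open>m = 2\<close> only with a blue first triangle). Give each boundary dart of \<open>F\<close> weight 4 and each
  blue interior dart weight 2, collected at the tail vertex. As \<open>\<alpha>\<close> swaps colours, half the
  interior darts are blue, and Euler characteristic 0 makes the total exactly 6 per vertex. An
  interior vertex, of degree at least 8, collects at least 8 and a boundary vertex at least 6, so
  there are no interior vertices and all boundary vertices collect exactly 6. Counting darts and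
  triangles then shows that every wedge has exactly three triangles, so along each walk the region
  stays on one side, the walk turns by 3 every time and the colour of the triangle left of its darts
  never changes. Reducedness forces all boundary darts of \<open>F\<close> to be blue, so the middle triangle
  of a wedge is red, and yet every triangle of \<open>F\<close> has a boundary edge.\<close>

section \<open>Orbits of an injective map\<close>

lemma vtx_self: "d \<in> vtx f d"
  unfolding vtx_def by (auto intro: exI[of _ 0])

lemma funpow_in_vtx: "(f ^^ j) d \<in> vtx f d"
  unfolding vtx_def by auto

lemma vtx_subset:
  assumes "x \<in> vtx f d"
  shows "vtx f x \<subseteq> vtx f d"
proof
  fix y assume "y \<in> vtx f x"
  then obtain j where "y = (f ^^ j) x" unfolding vtx_def by auto
  moreover obtain k where "x = (f ^^ k) d" using assms unfolding vtx_def by auto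
  ultimately have "y = (f ^^ (j + k)) d" by (simp add: funpow_add)
  then show "y \<in> vtx f d" unfolding vtx_def by auto
qed

lemma funpow_diff_fixpoint:
  assumes "inj f" and "a \<le> b" and "(f ^^ a) d = (f ^^ b) d"
  shows "(f ^^ (b - a)) d = d"
proof -
  have "(f ^^ a) ((f ^^ (b - a)) d) = (f ^^ (a + (b - a))) d" by (simp add: funpow_add)
  also have "\<dots> = (f ^^ a) d" using assms(2,3) by simp
  finally show ?thesis using inj_fn[OF assms(1), of a] by (auto dest: injD)
qed

lemma funpow_period_exists:
  assumes inj: "inj f" and fin: "finite (vtx f d)"
  shows "\<exists>p. 0 < p \<and> (f ^^ p) d = d"
proof -
  let ?N = "card (vtx f d)"
  have "\<not> inj_on (\<lambda>k. (f ^^ k) d) {..?N}"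
  proof
    assume "inj_on (\<lambda>k. (f ^^ k) d) {..?N}"
    from card_inj_on_le[OF this _ fin] have "card {..?N} \<le> ?N"
      unfolding vtx_def by auto
    then show False by simp
  qed
  then obtain i j where "i < j" "(f ^^ i) d = (f ^^ j) d"
    using linorder_inj_onI'[of "{..?N}" "\<lambda>k. (f ^^ k) d"] by blast
  then show ?thesis using funpow_diff_fixpoint[OF inj] by (intro exI[of _ "j - i"]) auto
qed

lemma vtx_cycle:
  assumes inj: "inj f" and fin: "finite (vtx f d)"
  defines "N \<equiv> card (vtx f d)"
  shows "0 < N" and "(f ^^ N) d = d" and "inj_on (\<lambda>j. (f ^^ j) d) {..<N}"
    and "vtx f d = (\<lambda>j. (f ^^ j) d) ` {..<N}"
proof -
  define p where "p = (LEAST p. 0 < p \<and> (f ^^ p) d = d)"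
  have p: "0 < p" "(f ^^ p) d = d"
    using LeastI_ex[OF funpow_period_exists[OF inj fin]] unfolding p_def by auto
  have inj_p: "inj_on (\<lambda>j. (f ^^ j) d) {..<p}"
  proof (rule linorder_inj_onI')
    fix a b assume "a \<in> {..<p}" "b \<in> {..<p}" "a < b"
    show "(f ^^ a) d \<noteq> (f ^^ b) d"
    proof
      assume "(f ^^ a) d = (f ^^ b) d"
      then have "(f ^^ (b - a)) d = d" using funpow_diff_fixpoint[OF inj] \<open>a < b\<close> by simp
      moreover have "0 < b - a" "b - a < p" using \<open>a < b\<close> \<open>b \<in> {..<p}\<close> by auto
      ultimately show False using not_less_Least[of "b - a"] unfolding p_def by blast
    qed
  qed
  have image_p: "vtx f d = (\<lambda>j. (f ^^ j) d) ` {..<p}"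
  proof
    show "vtx f d \<subseteq> (\<lambda>j. (f ^^ j) d) ` {..<p}"
    proof
      fix x assume "x \<in> vtx f d"
      then obtain k where "x = (f ^^ k) d" unfolding vtx_def by auto
      then have "x = (f ^^ (k mod p)) d" using funpow_mod_eq[OF p(2)] by simp
      then show "x \<in> (\<lambda>j. (f ^^ j) d) ` {..<p}" using p(1) by auto
    qed
  qed (auto simp: vtx_def)
  have "N = p" unfolding N_def image_p using card_image[OF inj_p] by simp
  with p inj_p image_p show "0 < N" "(f ^^ N) d = d" "inj_on (\<lambda>j. (f ^^ j) d) {..<N}"
    "vtx f d = (\<lambda>j. (f ^^ j) d) ` {..<N}" by simp_all
qed

lemma vtx_eq_iff:
  assumes "inj f" and "finite (vtx f d)"
  shows "vtx f x = vtx f d \<longleftrightarrow> x \<in> vtx f d"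
proof
  assume "x \<in> vtx f d"
  then obtain k where k: "x = (f ^^ k) d" unfolding vtx_def by auto
  define N where "N = card (vtx f d)"
  have N: "0 < N" "(f ^^ N) d = d" using vtx_cycle[OF assms] unfolding N_def by simp_all
  have "(f ^^ (N - k mod N)) x = (f ^^ (N - k mod N + k mod N)) d"
    by (simp add: k funpow_add funpow_mod_eq[OF N(2)])
  also have "\<dots> = d" using N by simp
  finally have "d \<in> vtx f x" by (metis funpow_in_vtx)
  then show "vtx f x = vtx f d"
    using vtx_subset[OF \<open>x \<in> vtx f d\<close>] vtx_subset[of d f x] by (rule_tac subset_antisym) simp_all
next
  show "vtx f x = vtx f d \<Longrightarrow> x \<in> vtx f d" using vtx_self[of x f] by simp
qed


section \<open>Reducing triangulations\<close>

locale reducing_map =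
  fixes \<alpha> \<phi> :: "'a \<Rightarrow> 'a" and col :: "'a \<Rightarrow> color"
  assumes reducing: "reducing_triangulation \<alpha> \<phi> col"
begin

abbreviation \<sigma> where "\<sigma> \<equiv> rot \<alpha> \<phi>"

lemma alpha_alpha [simp]: "\<alpha> (\<alpha> d) = d"
  and alpha_neq: "\<alpha> d \<noteq> d"
  and phi_phi_phi [simp]: "\<phi> (\<phi> (\<phi> d)) = d"
  and phi_neq: "\<phi> d \<noteq> d"
  and finite_vtx: "finite (vtx \<sigma> d)"
  and deg_ge_8: "8 \<le> deg \<sigma> d"
  and col_phi [simp]: "col (\<phi> d) = col d"
  and col_alpha: "col (\<alpha> d) \<noteq> col d"
  using reducing unfolding reducing_triangulation_def by auto

lemma sigma_apply: "\<sigma> x = \<phi> (\<alpha> x)"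
  by (simp add: rot_def)

lemma inj_sigma: "inj \<sigma>"
  by (rule inj_on_inverseI[where g = "\<lambda>x. \<alpha> (\<phi> (\<phi> x))"]) (simp add: sigma_apply)

lemma col_sigma: "col (\<sigma> x) \<noteq> col x"
  by (simp add: sigma_apply col_alpha)

lemma col_funpow_sigma: "col ((\<sigma> ^^ j) x) = (if even j then col x else col (\<sigma> x))"
proof (induction j)
  case (Suc j)
  have "col ((\<sigma> ^^ Suc j) x) \<noteq> col ((\<sigma> ^^ j) x)" using col_sigma by simp
  with Suc col_sigma[of x] show ?case
    by (cases "col ((\<sigma> ^^ Suc j) x)"; cases "col ((\<sigma> ^^ j) x)"; cases "col x"; cases "col (\<sigma> x)")
      (auto split: if_splits)
qed simp

lemma funpow_deg: "(\<sigma> ^^ deg \<sigma> d) d = d"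
  and inj_on_funpow_deg: "inj_on (\<lambda>j. (\<sigma> ^^ j) d) {..<deg \<sigma> d}"
  and vtx_eq_funpow_image: "vtx \<sigma> d = (\<lambda>j. (\<sigma> ^^ j) d) ` {..<deg \<sigma> d}"
  using vtx_cycle[OF inj_sigma finite_vtx] unfolding deg_def by blast+

lemma funpow_mod_deg: "(\<sigma> ^^ (k mod deg \<sigma> d)) d = (\<sigma> ^^ k) d"
  by (rule funpow_mod_eq[OF funpow_deg])

lemma funpow_sigma_eq_iff:
  "i < deg \<sigma> d \<Longrightarrow> j < deg \<sigma> d \<Longrightarrow> (\<sigma> ^^ i) d = (\<sigma> ^^ j) d \<longleftrightarrow> i = j"
  using inj_on_funpow_deg[of d] unfolding inj_on_def by blast

lemma vtx_sigma_eq_iff: "vtx \<sigma> x = vtx \<sigma> d \<longleftrightarrow> x \<in> vtx \<sigma> d"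
  by (rule vtx_eq_iff[OF inj_sigma finite_vtx])

lemma vtx_funpow_sigma [simp]: "vtx \<sigma> ((\<sigma> ^^ j) d) = vtx \<sigma> d"
  by (simp add: vtx_sigma_eq_iff funpow_in_vtx)

lemma deg_eq: "x \<in> vtx \<sigma> d \<Longrightarrow> deg \<sigma> x = deg \<sigma> d"
  unfolding deg_def by (metis vtx_sigma_eq_iff)

lemma lturn_spec:
  assumes "e' \<in> vtx \<sigma> (\<alpha> e)"
  shows "(\<sigma> ^^ lturn \<alpha> \<phi> e e') (\<alpha> e) = e'" and "lturn \<alpha> \<phi> e e' < deg \<sigma> (\<alpha> e)"
proof -
  obtain j where j: "(\<sigma> ^^ j) (\<alpha> e) = e'" using assms unfolding vtx_def by auto
  then show "(\<sigma> ^^ lturn \<alpha> \<phi> e e') (\<alpha> e) = e'"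
    unfolding lturn_def by (rule LeastI)
  have "lturn \<alpha> \<phi> e e' \<le> j mod deg \<sigma> (\<alpha> e)"
    unfolding lturn_def by (rule Least_le) (simp add: funpow_mod_deg j)
  also have "\<dots> < deg \<sigma> (\<alpha> e)" using deg_ge_8[of "\<alpha> e"] by simp
  finally show "lturn \<alpha> \<phi> e e' < deg \<sigma> (\<alpha> e)" .
qed

lemma rturn_spec:
  assumes "e' \<in> vtx \<sigma> (\<alpha> e)"
  shows "(\<sigma> ^^ rturn \<alpha> \<phi> e e') e' = \<alpha> e"
proof -
  have "(\<sigma> ^^ rturn \<alpha> \<phi> e e') e' = (\<sigma> ^^ (rturn \<alpha> \<phi> e e' + lturn \<alpha> \<phi> e e')) (\<alpha> e)"
    using lturn_spec(1)[OF assms] by (simp add: funpow_add)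
  also have "rturn \<alpha> \<phi> e e' + lturn \<alpha> \<phi> e e' = deg \<sigma> (\<alpha> e)"
    using lturn_spec(2)[OF assms] unfolding rturn_def by simp
  finally show ?thesis using funpow_deg by simp
qed

end


section \<open>Regions, corners and the discharging count\<close>

locale region = reducing_map +
  fixes F Bd :: "'a set"
  assumes finite_F: "finite F"
    and phi_in_F: "d \<in> F \<Longrightarrow> \<phi> d \<in> F"
    and boundary_iff: "x \<in> Bd \<longleftrightarrow> (x \<in> F \<longleftrightarrow> \<alpha> x \<notin> F)"
begin

lemma phi_in_F_iff [simp]: "\<phi> x \<in> F \<longleftrightarrow> x \<in> F"
proof
  assume "\<phi> x \<in> F"
  then have "\<phi> (\<phi> (\<phi> x)) \<in> F" using phi_in_F by blast
  then show "x \<in> F" by simp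
qed (rule phi_in_F)

lemma sigma_in_F_iff: "\<sigma> x \<in> F \<longleftrightarrow> \<alpha> x \<in> F"
  by (simp add: sigma_apply)

lemma alpha_in_Bd_iff [simp]: "\<alpha> x \<in> Bd \<longleftrightarrow> x \<in> Bd"
  using boundary_iff[of x] boundary_iff[of "\<alpha> x"] by auto

lemma interior_alpha_in_F_iff: "x \<notin> Bd \<Longrightarrow> \<alpha> x \<in> F \<longleftrightarrow> x \<in> F"
  using boundary_iff by blast

lemma boundary_alpha_in_F_iff: "x \<in> Bd \<Longrightarrow> \<alpha> x \<in> F \<longleftrightarrow> x \<notin> F"
  using boundary_iff by blast

lemma funpow_sigma_in_F_iff:
  assumes "0 < q" and "\<And>j. 0 < j \<Longrightarrow> j < q \<Longrightarrow> (\<sigma> ^^ j) y \<notin> Bd"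
  shows "(\<sigma> ^^ q) y \<in> F \<longleftrightarrow> \<sigma> y \<in> F"
  using assms
proof (induction q)
  case (Suc q)
  show ?case
  proof (cases "q = 0")
    case False
    then have "(\<sigma> ^^ q) y \<notin> Bd" using Suc.prems(2)[of q] by simp
    then have "(\<sigma> ^^ Suc q) y \<in> F \<longleftrightarrow> (\<sigma> ^^ q) y \<in> F"
      by (simp add: sigma_in_F_iff interior_alpha_in_F_iff)
    with Suc False show ?thesis by simp
  qed simp
qed simp

lemma funpow_not_boundary:
  assumes "Bd \<inter> vtx \<sigma> a = {a, (\<sigma> ^^ k) a}" "k < deg \<sigma> a"
    and "0 < j" "j < deg \<sigma> a" "j \<noteq> k"
  shows "(\<sigma> ^^ j) a \<notin> Bd"
proof
  assume "(\<sigma> ^^ j) a \<in> Bd"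
  then have "(\<sigma> ^^ j) a = (\<sigma> ^^ 0) a \<or> (\<sigma> ^^ j) a = (\<sigma> ^^ k) a"
    using assms(1) funpow_in_vtx[where f = \<sigma>] by auto
  then show False using assms funpow_sigma_eq_iff[of j a 0] funpow_sigma_eq_iff[of j a k] by auto
qed

text \<open>A corner is a vertex meeting the boundary in exactly two darts, the region filling the
  \<open>m\<close> triangles swept clockwise from the outer boundary dart \<open>a\<close> to \<open>(\<sigma> ^^ m) a\<close>. The bounds on
  \<open>m\<close> and the colour condition are what a turn that is not bad provides.\<close>

definition corner :: "'a \<Rightarrow> nat \<Rightarrow> bool" where
  "corner a m \<longleftrightarrow> a \<in> Bd \<and> a \<notin> F \<and> 2 \<le> m \<and> m < deg \<sigma> a \<and>
     Bd \<inter> vtx \<sigma> a = {a, (\<sigma> ^^ m) a} \<and> (m = 2 \<longrightarrow> col (\<sigma> a) = Blue)"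

lemma corner_funpow_not_boundary:
  assumes "corner a m" "0 < j" "j < deg \<sigma> a" "j \<noteq> m"
  shows "(\<sigma> ^^ j) a \<notin> Bd"
  using assms funpow_not_boundary unfolding corner_def by blast

lemma corner_funpow_in_F_iff:
  assumes corner: "corner a m" and j: "j < deg \<sigma> a"
  shows "(\<sigma> ^^ j) a \<in> F \<longleftrightarrow> 0 < j \<and> j \<le> m"
proof -
  have a: "a \<in> Bd" "a \<notin> F" "2 \<le> m" "m < deg \<sigma> a" and m_Bd: "(\<sigma> ^^ m) a \<in> Bd"
    using corner unfolding corner_def by auto
  have "\<sigma> a \<in> F" using a by (simp add: sigma_in_F_iff boundary_alpha_in_F_iff)
  then have inside: "(\<sigma> ^^ i) a \<in> F" if "0 < i" "i \<le> m" for i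
    using funpow_sigma_in_F_iff[of i a] corner_funpow_not_boundary[OF corner] that a by simp
  have outside: "(\<sigma> ^^ i) a \<notin> F" if "m < i" "i < deg \<sigma> a" for i
  proof -
    have "\<sigma> ((\<sigma> ^^ m) a) \<notin> F"
      using m_Bd inside[of m] a by (simp add: sigma_in_F_iff boundary_alpha_in_F_iff)
    moreover have "(\<sigma> ^^ (i - m)) ((\<sigma> ^^ m) a) \<in> F \<longleftrightarrow> \<sigma> ((\<sigma> ^^ m) a) \<in> F"
    proof (rule funpow_sigma_in_F_iff)
      fix k assume "0 < k" "k < i - m"
      then show "(\<sigma> ^^ k) ((\<sigma> ^^ m) a) \<notin> Bd"
        using corner_funpow_not_boundary[OF corner, of "k + m"] that by (simp add: funpow_add)
    qed (use that in simp)
    moreover have "(\<sigma> ^^ (i - m)) ((\<sigma> ^^ m) a) = (\<sigma> ^^ (i - m + m)) a"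
      by (simp add: funpow_add)
    ultimately show ?thesis using that by simp
  qed
  show ?thesis
  proof (cases "0 < j \<and> j \<le> m")
    case False
    then have "j = 0 \<or> m < j" by auto
    then show ?thesis using outside j a(2) False by auto
  qed (simp add: inside)
qed

lemma corner_last_in_F_boundary: "corner a m \<Longrightarrow> (\<sigma> ^^ m) a \<in> F \<inter> Bd"
  using corner_funpow_in_F_iff[of a m m] unfolding corner_def by auto

lemma corner_boundary_in_F:
  assumes "corner a m" and "x \<in> F \<inter> Bd" and "x \<in> vtx \<sigma> a"
  shows "x = (\<sigma> ^^ m) a"
  using assms unfolding corner_def by auto

lemma corner_boundary_outside:
  assumes "corner a m" and "x \<in> Bd" and "x \<notin> F" and "x \<in> vtx \<sigma> a"
  shows "x = a"
  using assms corner_last_in_F_boundary[OF assms(1)] unfolding corner_def by auto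

lemma corner_fiber:
  assumes corner: "corner a m"
  shows "{x \<in> F. vtx \<sigma> x = vtx \<sigma> a} = (\<lambda>j. (\<sigma> ^^ j) a) ` {1..m}"
proof (intro equalityI subsetI)
  fix x assume "x \<in> {x \<in> F. vtx \<sigma> x = vtx \<sigma> a}"
  then have "x \<in> F" "x \<in> vtx \<sigma> a" using vtx_sigma_eq_iff by auto
  moreover from this(2) obtain j where "j < deg \<sigma> a" "x = (\<sigma> ^^ j) a"
    unfolding vtx_eq_funpow_image by auto
  ultimately show "x \<in> (\<lambda>j. (\<sigma> ^^ j) a) ` {1..m}"
    using corner_funpow_in_F_iff[OF corner] by auto
next
  fix x assume "x \<in> (\<lambda>j. (\<sigma> ^^ j) a) ` {1..m}"
  moreover have "m < deg \<sigma> a" using corner unfolding corner_def by simp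
  ultimately show "x \<in> {x \<in> F. vtx \<sigma> x = vtx \<sigma> a}"
    using corner_funpow_in_F_iff[OF corner] by auto
qed

lemma inj_on_corner_fiber: "corner a m \<Longrightarrow> inj_on (\<lambda>j. (\<sigma> ^^ j) a) {1..m}"
  by (rule inj_on_subset[OF inj_on_funpow_deg]) (auto simp: corner_def)

lemma card_corner_fiber: "corner a m \<Longrightarrow> card {x \<in> F. vtx \<sigma> x = vtx \<sigma> a} = m"
  using corner_fiber inj_on_corner_fiber card_image by fastforce

lemma corner_of_left_turn:
  assumes e: "e \<in> F \<inter> Bd" and e': "e' \<in> vtx \<sigma> (\<alpha> e)"
    and boundary: "Bd \<inter> vtx \<sigma> (\<alpha> e) = {\<alpha> e, e'}" and good: "\<not> bad_turn \<alpha> \<phi> col e e'"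
  shows "corner (\<alpha> e) (lturn \<alpha> \<phi> e e')"
proof -
  let ?k = "lturn \<alpha> \<phi> e e'"
  have k: "2 \<le> ?k" "?k = 2 \<longrightarrow> col e \<noteq> Red" using good unfolding bad_turn_def by auto
  have "col (\<sigma> (\<alpha> e)) = col e" by (simp add: sigma_apply)
  with k have "?k = 2 \<longrightarrow> col (\<sigma> (\<alpha> e)) = Blue" by (cases "col e") auto
  moreover have "\<alpha> e \<in> Bd" "\<alpha> e \<notin> F" using e boundary_alpha_in_F_iff by auto
  ultimately show ?thesis
    unfolding corner_def using k(1) lturn_spec[OF e'] boundary by simp
qed

lemma corner_of_right_turn:
  assumes e: "e \<in> Bd" "e \<notin> F" and e': "e' \<in> vtx \<sigma> (\<alpha> e)"
    and boundary: "Bd \<inter> vtx \<sigma> (\<alpha> e) = {\<alpha> e, e'}" and good: "\<not> bad_turn \<alpha> \<phi> col e e'"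
  shows "corner e' (rturn \<alpha> \<phi> e e')"
proof -
  define k r where "k = lturn \<alpha> \<phi> e e'" and "r = rturn \<alpha> \<phi> e e'"
  have k: "(\<sigma> ^^ k) (\<alpha> e) = e'" "k < deg \<sigma> (\<alpha> e)" using lturn_spec[OF e'] unfolding k_def by auto
  have r: "r = deg \<sigma> (\<alpha> e) - k" "(\<sigma> ^^ r) e' = \<alpha> e"
    using rturn_spec[OF e'] unfolding r_def k_def rturn_def by simp_all
  have good': "k \<noteq> 0" "r \<noteq> 1" "r = 2 \<longrightarrow> col e \<noteq> Red"
    using good unfolding bad_turn_def k_def r_def by auto
  have vtx_e': "vtx \<sigma> e' = vtx \<sigma> (\<alpha> e)" "deg \<sigma> e' = deg \<sigma> (\<alpha> e)"
    using e' vtx_sigma_eq_iff deg_eq by auto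
  have "(\<sigma> ^^ k) (\<alpha> e) \<in> F \<longleftrightarrow> \<sigma> (\<alpha> e) \<in> F"
  proof (rule funpow_sigma_in_F_iff)
    fix j assume "0 < j" "j < k"
    then show "(\<sigma> ^^ j) (\<alpha> e) \<notin> Bd" using funpow_not_boundary[of "\<alpha> e" k j] boundary k by auto
  qed (use good' in simp)
  moreover have "\<sigma> (\<alpha> e) \<notin> F" using e by (simp add: sigma_apply)
  ultimately have "e' \<notin> F" using k by simp
  moreover have "col (\<sigma> e') = Blue" if "r = 2"
  proof -
    have "\<sigma> (\<sigma> e') = \<alpha> e" using r(2) that by (simp add: numeral_2_eq_2)
    then have "col (\<alpha> e) \<noteq> col (\<sigma> e')" using col_sigma[of "\<sigma> e'"] by simp
    then show ?thesis using col_alpha[of e] good' that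
      by (cases "col e"; cases "col (\<alpha> e)"; cases "col (\<sigma> e')") auto
  qed
  moreover have "2 \<le> r" "r < deg \<sigma> e'" using r(1) k(2) good' vtx_e' by auto
  ultimately show ?thesis
    unfolding corner_def r_def[symmetric] using boundary r(2) vtx_e' by auto
qed

definition weight :: "'a \<Rightarrow> int" where
  "weight x = (if x \<in> Bd then 4 else if col x = Blue then 2 else 0)"

definition charge :: "'a set \<Rightarrow> int" where
  "charge X = sum weight {x \<in> F. vtx \<sigma> x = X}"

lemma weight_nonneg: "0 \<le> weight x"
  unfolding weight_def by simp

lemma charge_corner:
  assumes corner: "corner a m"
  shows "charge (vtx \<sigma> a) = 4 + (\<Sum>j\<in>{1..<m}. if odd j \<longleftrightarrow> col (\<sigma> a) = Blue then 2 else 0)"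
proof -
  have m: "2 \<le> m" and last: "(\<sigma> ^^ m) a \<in> Bd" using corner unfolding corner_def by auto
  have "charge (vtx \<sigma> a) = (\<Sum>j\<in>{1..m}. weight ((\<sigma> ^^ j) a))"
    unfolding charge_def corner_fiber[OF corner] sum.reindex[OF inj_on_corner_fiber[OF corner]]
    by simp
  also have "{1..m} = insert m {1..<m}" using m by auto
  finally have "charge (vtx \<sigma> a) = 4 + (\<Sum>j\<in>{1..<m}. weight ((\<sigma> ^^ j) a))"
    using last by (simp add: weight_def)
  also have "(\<Sum>j\<in>{1..<m}. weight ((\<sigma> ^^ j) a)) =
      (\<Sum>j\<in>{1..<m}. if odd j \<longleftrightarrow> col (\<sigma> a) = Blue then 2 else 0)"
  proof (rule sum.cong[OF refl])
    fix j assume "j \<in> {1..<m}"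
    then have "(\<sigma> ^^ j) a \<notin> Bd" using corner_funpow_not_boundary[OF corner, of j] corner
      unfolding corner_def by auto
    then show "weight ((\<sigma> ^^ j) a) = (if odd j \<longleftrightarrow> col (\<sigma> a) = Blue then 2 else 0)"
      using col_funpow_sigma[of j a] col_sigma[of a] unfolding weight_def
      by (cases "col a"; cases "col (\<sigma> a)") auto
  qed
  finally show ?thesis .
qed

lemma charge_corner_ge_6:
  assumes corner: "corner a m"
  shows "6 \<le> charge (vtx \<sigma> a)"
proof -
  define g :: "nat \<Rightarrow> int" where "g j = (if odd j \<longleftrightarrow> col (\<sigma> a) = Blue then 2 else 0)" for j
  have m: "2 \<le> m" "m = 2 \<longrightarrow> col (\<sigma> a) = Blue" using corner unfolding corner_def by auto
  have "2 \<le> sum g {1..<m}"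
  proof (cases "m = 2")
    case True
    then have "{1..<m} = {1}" by auto
    with True m show ?thesis by (simp add: g_def)
  next
    case False
    then have "sum g {1, 2} \<le> sum g {1..<m}" using m by (intro sum_mono2) (auto simp: g_def)
    then show ?thesis by (cases "col (\<sigma> a)") (simp_all add: g_def)
  qed
  then show ?thesis using charge_corner[OF corner] unfolding g_def by simp
qed

lemma charge_corner_eq_6:
  assumes corner: "corner a m" and charge: "charge (vtx \<sigma> a) = 6"
  shows "m \<le> 4 \<and> (m = 4 \<longrightarrow> col (\<sigma> a) = Red)"
proof -
  define g :: "nat \<Rightarrow> int" where "g j = (if odd j \<longleftrightarrow> col (\<sigma> a) = Blue then 2 else 0)" for j
  have sum_g: "sum g {1..<m} = 2" using charge_corner[OF corner] charge unfolding g_def by simp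
  have "m \<le> 4"
  proof (rule ccontr)
    assume "\<not> m \<le> 4"
    then have "sum g {1, 2, 3, 4} \<le> sum g {1..<m}" by (intro sum_mono2) (auto simp: g_def)
    then show False using sum_g by (cases "col (\<sigma> a)") (simp_all add: g_def)
  qed
  moreover have "col (\<sigma> a) = Red" if "m = 4"
  proof (rule ccontr)
    assume "col (\<sigma> a) \<noteq> Red"
    then have "col (\<sigma> a) = Blue" by (cases "col (\<sigma> a)") auto
    moreover have "sum g {1, 3} \<le> sum g {1..<m}" using that by (intro sum_mono2) (auto simp: g_def)
    ultimately show False using sum_g by (simp add: g_def)
  qed
  ultimately show ?thesis by simp
qed

lemma interior_fiber:
  assumes "d \<in> F" "Bd \<inter> vtx \<sigma> d = {}"
  shows "{x \<in> F. vtx \<sigma> x = vtx \<sigma> d} = vtx \<sigma> d"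
proof -
  have "(\<sigma> ^^ j) d \<in> F" for j
  proof (induction j)
    case (Suc j)
    have "(\<sigma> ^^ j) d \<notin> Bd" using assms(2) funpow_in_vtx[where f = \<sigma>] by blast
    with Suc show ?case by (simp add: sigma_in_F_iff interior_alpha_in_F_iff)
  qed (simp add: assms(1))
  then have "vtx \<sigma> d \<subseteq> F" unfolding vtx_def by auto
  then show ?thesis using vtx_sigma_eq_iff by auto
qed

lemma charge_interior_ge_8:
  assumes "d \<in> F" "Bd \<inter> vtx \<sigma> d = {}"
  shows "8 \<le> charge (vtx \<sigma> d)"
proof -
  have weight: "weight ((\<sigma> ^^ j) d) = (if (if even j then col d else col (\<sigma> d)) = Blue then 2 else 0)"
    for j
    using assms(2) funpow_in_vtx[where f = \<sigma>] col_funpow_sigma[of j d] unfolding weight_def by auto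
  have inj8: "inj_on (\<lambda>j. (\<sigma> ^^ j) d) {..<8}"
    using inj_on_subset[OF inj_on_funpow_deg] deg_ge_8[of d] by auto
  have "(\<Sum>j<8. weight ((\<sigma> ^^ j) d)) = sum weight ((\<lambda>j. (\<sigma> ^^ j) d) ` {..<8})"
    by (rule sum.reindex_cong[OF inj8, symmetric]) simp_all
  also have "\<dots> \<le> sum weight (vtx \<sigma> d)"
    by (rule sum_mono2[OF finite_vtx]) (auto simp: weight_nonneg funpow_in_vtx)
  also have "\<dots> = charge (vtx \<sigma> d)"
    unfolding charge_def interior_fiber[OF assms] ..
  finally have "(\<Sum>j<8. weight ((\<sigma> ^^ j) d)) \<le> charge (vtx \<sigma> d)" .
  moreover have "{..<8::nat} = {0, 1, 2, 3, 4, 5, 6, 7}" by auto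
  ultimately show ?thesis
    using col_sigma[of d] by (cases "col d"; cases "col (\<sigma> d)") (simp_all add: weight)
qed

abbreviation tri :: "'a \<Rightarrow> 'a set" where
  "tri d \<equiv> {d, \<phi> d, \<phi> (\<phi> d)}"

abbreviation edge :: "'a \<Rightarrow> 'a set" where
  "edge d \<equiv> {d, \<alpha> d}"

lemma tri_eq: "x \<in> tri d \<Longrightarrow> tri x = tri d"
  by auto

lemma card_tri: "card (tri d) = 3"
proof -
  have "\<phi> (\<phi> d) \<noteq> d"
  proof
    assume "\<phi> (\<phi> d) = d"
    then have "\<phi> (\<phi> (\<phi> d)) = \<phi> d" by simp
    with phi_neq[of d] show False by simp
  qed
  with phi_neq[of d] phi_neq[of "\<phi> d"] show ?thesis by auto
qed

lemma card_F_eq_3_tri: "card F = 3 * card (tri ` F)"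
proof -
  have "card F = (\<Sum>Y\<in>tri ` F. card {x \<in> F. tri x = Y})"
    using sum.image_gen[OF finite_F, of "\<lambda>_. 1::nat" tri] by simp
  also have "\<dots> = (\<Sum>Y\<in>tri ` F. 3)"
  proof (rule sum.cong[OF refl])
    fix Y assume "Y \<in> tri ` F"
    then obtain d where d: "d \<in> F" "Y = tri d" by auto
    then have "{x \<in> F. tri x = Y} = tri d" using tri_eq by auto
    then show "card {x \<in> F. tri x = Y} = 3" using card_tri by simp
  qed
  finally show ?thesis by simp
qed

lemma card_edges: "2 * card (edge ` F) = card F + card (F \<inter> Bd)"
proof -
  define g where "g x = (if x \<in> Bd then 2 else 1::nat)" for x
  have "card F + card (F \<inter> Bd) = sum g (F \<inter> Bd) + sum g (F - Bd)"
    using card_Int_Diff[OF finite_F, of Bd] unfolding g_def by simp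
  also have "\<dots> = sum g F" by (rule sum.Int_Diff[OF finite_F, symmetric])
  also have "\<dots> = (\<Sum>Y\<in>edge ` F. sum g {x \<in> F. edge x = Y})"
    by (rule sum.image_gen[OF finite_F])
  also have "\<dots> = (\<Sum>Y\<in>edge ` F. 2)"
  proof (rule sum.cong[OF refl])
    fix Y assume "Y \<in> edge ` F"
    then obtain d where d: "d \<in> F" "Y = edge d" by auto
    then have fiber: "{x \<in> F. edge x = Y} = F \<inter> {d, \<alpha> d}"
      using alpha_neq by (auto simp: doubleton_eq_iff)
    show "sum g {x \<in> F. edge x = Y} = 2"
    proof (cases "d \<in> Bd")
      case True
      then have "F \<inter> {d, \<alpha> d} = {d}" using d boundary_alpha_in_F_iff by auto
      with True show ?thesis unfolding fiber g_def by simp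
    next
      case False
      then have "F \<inter> {d, \<alpha> d} = {d, \<alpha> d}" using d interior_alpha_in_F_iff by auto
      with False alpha_neq[of d] show ?thesis unfolding fiber g_def by simp
    qed
  qed
  finally show ?thesis by simp
qed

lemma colour_balance: "(\<Sum>x\<in>F - Bd. if col x = Blue then 1 else -1 :: int) = 0"
proof -
  define c where "c x = (if col x = Blue then 1 else -1 :: int)" for x
  have "\<alpha> ` (F - Bd) = F - Bd"
    using interior_alpha_in_F_iff by (auto intro: image_eqI[of _ \<alpha> "\<alpha> _"])
  then have "bij_betw \<alpha> (F - Bd) (F - Bd)"
    by (simp add: bij_betw_def inj_on_def) (metis alpha_alpha)
  then have "(\<Sum>x\<in>F - Bd. c (\<alpha> x)) = sum c (F - Bd)" by (rule sum.reindex_bij_betw)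
  moreover have "c (\<alpha> x) = - c x" for x
    using col_alpha[of x] unfolding c_def by (cases "col x"; cases "col (\<alpha> x)") auto
  ultimately have "sum c (F - Bd) = - sum c (F - Bd)" by (simp add: sum_negf)
  then show ?thesis unfolding c_def by simp
qed

lemma sum_weight: "sum weight F = 4 * int (card (F \<inter> Bd)) + int (card (F - Bd))"
proof -
  have "sum weight F = sum weight (F \<inter> Bd) + sum weight (F - Bd)"
    by (rule sum.Int_Diff[OF finite_F])
  also have "sum weight (F - Bd) = (\<Sum>x\<in>F - Bd. 1 + (if col x = Blue then 1 else -1 :: int))"
    by (rule sum.cong) (auto simp: weight_def)
  also have "\<dots> = int (card (F - Bd))" using colour_balance by (simp add: sum.distrib)
  finally show ?thesis by (simp add: weight_def)
qed

lemma sum_charge: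
  assumes euler: "int (card (vtx \<sigma> ` F)) - int (card (edge ` F)) + int (card (tri ` F)) = 0"
  shows "sum charge (vtx \<sigma> ` F) = 6 * int (card (vtx \<sigma> ` F))"
proof -
  have "sum charge (vtx \<sigma> ` F) = sum weight F"
    unfolding charge_def by (rule sum.image_gen[OF finite_F, symmetric])
  also have "\<dots> = 6 * int (card (vtx \<sigma> ` F))"
    using sum_weight card_Int_Diff[OF finite_F, of Bd] card_edges card_F_eq_3_tri euler by linarith
  finally show ?thesis .
qed

end


section \<open>Regions of Euler characteristic zero\<close>

locale flat_region = region +
  assumes boundary_vertex_corner:
      "d \<in> F \<Longrightarrow> Bd \<inter> vtx \<sigma> d \<noteq> {} \<Longrightarrow> \<exists>a m. corner a m \<and> vtx \<sigma> a = vtx \<sigma> d"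
    and euler: "int (card (vtx \<sigma> ` F)) - int (card (edge ` F)) + int (card (tri ` F)) = 0"
begin

lemma corner_vertex_in_F:
  assumes "corner a m"
  shows "vtx \<sigma> a \<in> vtx \<sigma> ` F"
proof -
  have "1 < deg \<sigma> a" "1 \<le> m" using assms unfolding corner_def by auto
  then have "\<sigma> a \<in> F" using corner_funpow_in_F_iff[OF assms, of 1] by simp
  moreover have "vtx \<sigma> (\<sigma> a) = vtx \<sigma> a" using vtx_funpow_sigma[of 1 a] by simp
  ultimately show ?thesis by (metis image_eqI)
qed

lemma vertex_interior_or_corner:
  assumes "d \<in> F"
  obtains "Bd \<inter> vtx \<sigma> d = {}" | a m where "corner a m" "vtx \<sigma> a = vtx \<sigma> d"
  using boundary_vertex_corner[OF assms] by blast

lemma charge_ge_6: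
  assumes "d \<in> F"
  shows "6 \<le> charge (vtx \<sigma> d)"
proof (cases rule: vertex_interior_or_corner[OF assms])
  case 1
  then show ?thesis using charge_interior_ge_8[OF assms] by simp
next
  case (2 a m)
  then show ?thesis using charge_corner_ge_6[of a m] by simp
qed

lemma charge_eq_6:
  assumes "d \<in> F"
  shows "charge (vtx \<sigma> d) = 6"
proof -
  have "(\<Sum>X\<in>vtx \<sigma> ` F. charge X - 6) = 0"
    using sum_charge[OF euler] by (simp add: sum_subtractf)
  moreover have "(\<Sum>X\<in>vtx \<sigma> ` F. charge X - 6) = 0 \<longleftrightarrow> (\<forall>X\<in>vtx \<sigma> ` F. charge X - 6 = 0)"
    by (rule sum_nonneg_eq_0_iff) (use finite_F charge_ge_6 in auto)
  moreover have "vtx \<sigma> d \<in> vtx \<sigma> ` F" using assms by (rule imageI)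
  ultimately have "charge (vtx \<sigma> d) - 6 = 0" by blast
  then show ?thesis by simp
qed

lemma vertex_corner:
  assumes "d \<in> F"
  obtains a m where "corner a m" "vtx \<sigma> a = vtx \<sigma> d"
proof (cases rule: vertex_interior_or_corner[OF assms])
  case 1
  then show ?thesis using charge_interior_ge_8[OF assms] charge_eq_6[OF assms] by simp
qed

lemma corner_le_4:
  assumes "corner a m"
  shows "m \<le> 4 \<and> (m = 4 \<longrightarrow> col (\<sigma> a) = Red)"
proof -
  obtain d where "d \<in> F" "vtx \<sigma> a = vtx \<sigma> d" using corner_vertex_in_F[OF assms] by blast
  then show ?thesis using charge_corner_eq_6[OF assms] charge_eq_6 by simp
qed

lemma card_boundary_F: "card (F \<inter> Bd) = card (vtx \<sigma> ` F)"
proof -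
  have "inj_on (vtx \<sigma>) (F \<inter> Bd)"
  proof (rule inj_onI)
    fix b b' assume b: "b \<in> F \<inter> Bd" "b' \<in> F \<inter> Bd" "vtx \<sigma> b = vtx \<sigma> b'"
    obtain a m where corner: "corner a m" and "vtx \<sigma> a = vtx \<sigma> b"
      using vertex_corner b(1) by blast
    with b(3) have "vtx \<sigma> b = vtx \<sigma> a" "vtx \<sigma> b' = vtx \<sigma> a" by simp_all
    then have "b \<in> vtx \<sigma> a" "b' \<in> vtx \<sigma> a" by (simp_all only: vtx_sigma_eq_iff)
    then show "b = b'" using corner_boundary_in_F[OF corner b(1)] corner_boundary_in_F[OF corner b(2)]
      by simp
  qed
  moreover have "vtx \<sigma> ` (F \<inter> Bd) = vtx \<sigma> ` F"
  proof (intro equalityI subsetI)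
    fix X assume "X \<in> vtx \<sigma> ` F"
    then obtain d where "d \<in> F" "X = vtx \<sigma> d" by blast
    moreover obtain a m where "corner a m" "vtx \<sigma> a = vtx \<sigma> d" using vertex_corner[OF \<open>d \<in> F\<close>] .
    ultimately have "(\<sigma> ^^ m) a \<in> F \<inter> Bd" "X = vtx \<sigma> ((\<sigma> ^^ m) a)"
      using corner_last_in_F_boundary by auto
    then show "X \<in> vtx \<sigma> ` (F \<inter> Bd)" by blast
  qed auto
  ultimately show ?thesis by (metis card_image)
qed

lemma card_F_eq_3_vertices: "card F = 3 * card (vtx \<sigma> ` F)"
proof -
  have "sum weight F = 6 * int (card (vtx \<sigma> ` F))"
    using sum_charge[OF euler] sum.image_gen[OF finite_F, of weight "vtx \<sigma>"]
    unfolding charge_def by simp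
  then show ?thesis
    using sum_weight card_boundary_F card_Int_Diff[OF finite_F, of Bd] by linarith
qed

lemma corner_between_boundary_darts:
  assumes "c \<in> Bd" "c \<notin> F" "(\<sigma> ^^ k) c \<in> F \<inter> Bd" "k < deg \<sigma> c"
  shows "corner c k"
proof -
  obtain a m where corner: "corner a m" and "vtx \<sigma> a = vtx \<sigma> ((\<sigma> ^^ k) c)"
    using vertex_corner[of "(\<sigma> ^^ k) c"] assms(3) by blast
  then have "vtx \<sigma> c = vtx \<sigma> a" "vtx \<sigma> ((\<sigma> ^^ k) c) = vtx \<sigma> a" by simp_all
  then have "c \<in> vtx \<sigma> a" "(\<sigma> ^^ k) c \<in> vtx \<sigma> a" by (simp_all only: vtx_sigma_eq_iff)
  then have "c = a" and "(\<sigma> ^^ k) c = (\<sigma> ^^ m) a"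
    using corner_boundary_outside[OF corner assms(1,2)] corner_boundary_in_F[OF corner assms(3)]
    by simp_all
  moreover have "m < deg \<sigma> a" using corner unfolding corner_def by simp
  ultimately have "k = m" using funpow_sigma_eq_iff[of k a m] assms(4) by simp
  with corner \<open>c = a\<close> show ?thesis by simp
qed

lemma boundary_not_phi_boundary:
  assumes "b \<in> F \<inter> Bd" "\<phi> b \<in> F \<inter> Bd"
  shows False
proof -
  have "\<alpha> b \<in> Bd" "\<alpha> b \<notin> F" using assms(1) boundary_alpha_in_F_iff by auto
  moreover have "(\<sigma> ^^ 1) (\<alpha> b) \<in> F \<inter> Bd" using assms(2) by (simp add: sigma_apply)
  moreover have "1 < deg \<sigma> (\<alpha> b)" using deg_ge_8[of "\<alpha> b"] by simp
  ultimately have "corner (\<alpha> b) 1" by (rule corner_between_boundary_darts)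
  then show False unfolding corner_def by simp
qed

lemma triangle_meets_boundary:
  assumes "d \<in> F"
  shows "\<exists>b \<in> F \<inter> Bd. b \<in> tri d"
proof -
  have "inj_on tri (F \<inter> Bd)"
  proof (rule inj_onI)
    fix b b' assume "b \<in> F \<inter> Bd" "b' \<in> F \<inter> Bd" "tri b = tri b'"
    then have "b' \<in> tri b" by (metis insertI1)
    then have "b' = b \<or> b' = \<phi> b \<or> b = \<phi> b'" by auto
    then show "b = b'"
      using boundary_not_phi_boundary \<open>b \<in> F \<inter> Bd\<close> \<open>b' \<in> F \<inter> Bd\<close> by blast
  qed
  then have "card (tri ` (F \<inter> Bd)) = card (F \<inter> Bd)" by (rule card_image)
  also have "\<dots> = card (tri ` F)"
    using card_boundary_F card_F_eq_3_tri card_F_eq_3_vertices by simp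
  finally have "card (tri ` (F \<inter> Bd)) = card (tri ` F)" .
  then have eq: "tri ` (F \<inter> Bd) = tri ` F"
    using card_subset_eq[of "tri ` F" "tri ` (F \<inter> Bd)"] finite_F by auto
  have "tri d \<in> tri ` (F \<inter> Bd)" unfolding eq using assms by (rule imageI)
  then obtain b where "tri d = tri b" "b \<in> F \<inter> Bd" by (rule imageE)
  then show ?thesis by auto
qed

lemma interior_triangle_boundary:
  assumes "x \<in> F" "x \<notin> Bd" "\<phi> (\<phi> x) \<notin> Bd"
  shows "\<phi> x \<in> F \<inter> Bd"
  using triangle_meets_boundary[OF assms(1)] assms by auto

text \<open>The triangles of the two middle darts of a corner of four triangles meet the boundary in
  the edges opposite the corner vertex. These two edges bound a corner of two triangles whose first
  triangle is red.\<close>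

lemma corner_ne_4:
  assumes corner: "corner a m"
  shows "m \<noteq> 4"
proof
  assume "m = 4"
  then have red: "col (\<sigma> a) = Red" using corner_le_4[OF corner] by simp
  have deg: "4 < deg \<sigma> a" using corner \<open>m = 4\<close> unfolding corner_def by simp
  have inside: "(\<sigma> ^^ j) a \<in> F - Bd" if "0 < j" "j < 4" for j
    using corner_funpow_in_F_iff[OF corner, of j] corner_funpow_not_boundary[OF corner, of j]
      that deg \<open>m = 4\<close> by auto
  define x where "x = \<sigma> (\<sigma> a)"
  have x: "x \<in> F - Bd" and \<sigma>x: "\<sigma> x \<in> F - Bd" and \<sigma>a: "\<sigma> a \<notin> Bd"
    using inside[of 2] inside[of 3] inside[of 1]
    unfolding x_def by (simp_all add: numeral_3_eq_3 numeral_2_eq_2)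
  have blue: "col x = Blue"
    using col_sigma[of a] col_sigma[of "\<sigma> a"] red unfolding x_def by (cases "col (\<sigma> (\<sigma> a))") auto
  have "\<phi> (\<phi> x) = \<alpha> (\<sigma> a)" unfolding x_def by (simp add: sigma_apply)
  then have \<phi>x: "\<phi> x \<in> F \<inter> Bd" using interior_triangle_boundary x \<sigma>a by simp
  have "\<phi> (\<phi> (\<sigma> x)) = \<alpha> x" by (simp add: sigma_apply)
  then have \<phi>\<sigma>x: "\<phi> (\<sigma> x) \<in> F \<inter> Bd" using interior_triangle_boundary \<sigma>x x by simp
  define c where "c = \<alpha> (\<phi> (\<sigma> x))"
  have c: "c \<in> Bd" "c \<notin> F" using \<phi>\<sigma>x boundary_alpha_in_F_iff unfolding c_def by auto
  have \<sigma>c: "\<sigma> c = \<alpha> x" unfolding c_def by (simp add: sigma_apply)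
  then have "(\<sigma> ^^ 2) c = \<phi> x" by (simp add: numeral_2_eq_2 sigma_apply)
  moreover have "2 < deg \<sigma> c" using deg_ge_8[of c] by simp
  ultimately have "corner c 2" using corner_between_boundary_darts c \<phi>x by simp
  then have "col (\<alpha> x) = Blue" using \<sigma>c unfolding corner_def by simp
  then show False using col_alpha[of x] blue by simp
qed

lemma corner_eq_3:
  assumes "corner a m"
  shows "m = 3"
proof -
  define n where "n X = card {x \<in> F. vtx \<sigma> x = X}" for X
  have n_le_3: "n X \<le> 3" if X: "X \<in> vtx \<sigma> ` F" for X
  proof -
    obtain d where d: "d \<in> F" "X = vtx \<sigma> d" using X by blast
    obtain b k where corner: "corner b k" and "vtx \<sigma> b = vtx \<sigma> d" using vertex_corner[OF d(1)] .
    then have "n X = k" using card_corner_fiber[OF corner] d(2) unfolding n_def by simp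
    moreover have "k \<le> 3" using corner_le_4[OF corner] corner_ne_4[OF corner] by simp
    ultimately show ?thesis by simp
  qed
  have "sum n (vtx \<sigma> ` F) = card F"
    unfolding n_def using sum.image_gen[OF finite_F, of "\<lambda>_. 1::nat" "vtx \<sigma>"] by simp
  also have "\<dots> = (\<Sum>X\<in>vtx \<sigma> ` F. 3)" using card_F_eq_3_vertices by simp
  finally have sum_n: "sum n (vtx \<sigma> ` F) = (\<Sum>X\<in>vtx \<sigma> ` F. 3)" .
  have "finite (vtx \<sigma> ` F)" using finite_F by simp
  then have "n (vtx \<sigma> a) = 3"
    using sum_mono_inv[OF sum_n n_le_3 corner_vertex_in_F[OF assms]] by simp
  then show ?thesis using card_corner_fiber[OF assms] unfolding n_def by simp
qed

lemma red_boundary_dart: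
  assumes "F \<noteq> {}"
  shows "\<exists>b \<in> F \<inter> Bd. col b = Red"
proof (rule ccontr)
  assume no_red: "\<not> ?thesis"
  obtain d where "d \<in> F" using assms by blast
  then obtain a m where corner: "corner a m" using vertex_corner by blast
  then have "m = 3" by (rule corner_eq_3)
  define x where "x = \<sigma> (\<sigma> a)"
  have "x \<in> F" using corner_funpow_in_F_iff[OF corner, of 2] corner \<open>m = 3\<close>
    unfolding corner_def x_def by (simp add: numeral_2_eq_2)
  have "\<sigma> x \<in> F \<inter> Bd"
    using corner_last_in_F_boundary[OF corner] \<open>m = 3\<close> unfolding x_def by (simp add: numeral_3_eq_3)
  then have "col x = Red" using no_red col_sigma[of x] by (cases "col x"; cases "col (\<sigma> x)") auto
  moreover obtain b where b: "b \<in> F \<inter> Bd" "b \<in> tri x"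
    using triangle_meets_boundary[OF \<open>x \<in> F\<close>] by blast
  ultimately have "col b = Red" by auto
  with b(1) no_red show False by blast
qed

end


section \<open>Reduced boundary walks\<close>

lemma add_one_mod_inj:
  fixes i j L :: nat
  assumes "i < L" "j < L" "(i + 1) mod L = (j + 1) mod L"
  shows "i = j"
proof -
  have "(x + 1) mod L = (if x + 1 = L then 0 else x + 1)" if "x < L" for x
    using that by auto
  from this[OF assms(1)] this[OF assms(2)] assms show ?thesis by (auto split: if_splits)
qed

locale boundary_walk = region +
  fixes W W' :: "'a list"
  assumes closed: "closed_walk \<alpha> \<phi> W" and closed': "closed_walk \<alpha> \<phi> W'"
    and simple: "simple_walk \<alpha> \<phi> W" and disjoint: "disjoint_walks \<alpha> \<phi> W W'"
    and boundary_eq: "Bd = set W \<union> \<alpha> ` set W \<union> set W' \<union> \<alpha> ` set W'"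
    and no_bad_turn: "\<And>i. i < length W \<Longrightarrow> \<not> bad_turn \<alpha> \<phi> col (W ! i) (W ! ((i + 1) mod length W))"
begin

abbreviation succ :: "nat \<Rightarrow> nat" where
  "succ i \<equiv> (i + 1) mod length W"

lemma succ_less: "succ i < length W"
  using closed unfolding closed_walk_def by simp

lemma succ_in_vtx: "i < length W \<Longrightarrow> W ! succ i \<in> vtx \<sigma> (\<alpha> (W ! i))"
  using closed unfolding closed_walk_def by blast

lemma vtx_succ: "i < length W \<Longrightarrow> vtx \<sigma> (W ! succ i) = vtx \<sigma> (\<alpha> (W ! i))"
  using succ_in_vtx vtx_sigma_eq_iff by blast

lemma vtx_succ': "j < length W' \<Longrightarrow> vtx \<sigma> (W' ! ((j + 1) mod length W')) = vtx \<sigma> (\<alpha> (W' ! j))"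
  using closed' vtx_sigma_eq_iff unfolding closed_walk_def by blast

lemma vtx_nth_eq_iff: "i < length W \<Longrightarrow> j < length W \<Longrightarrow> vtx \<sigma> (W ! i) = vtx \<sigma> (W ! j) \<longleftrightarrow> i = j"
  using simple unfolding simple_walk_def by blast

lemma vtx_nth_neq: "i < length W \<Longrightarrow> j < length W' \<Longrightarrow> vtx \<sigma> (W ! i) \<noteq> vtx \<sigma> (W' ! j)"
  using disjoint unfolding disjoint_walks_def by blast

lemma boundary_at_turn:
  assumes i: "i < length W"
  shows "Bd \<inter> vtx \<sigma> (\<alpha> (W ! i)) = {\<alpha> (W ! i), W ! succ i}"
proof (intro equalityI subsetI)
  fix x assume "x \<in> Bd \<inter> vtx \<sigma> (\<alpha> (W ! i))"
  then have x: "x \<in> Bd" "vtx \<sigma> x = vtx \<sigma> (W ! succ i)"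
    using vtx_succ[OF i] vtx_sigma_eq_iff by auto
  consider j where "j < length W" "x = W ! j" | j where "j < length W" "x = \<alpha> (W ! j)"
    | j where "j < length W'" "x = W' ! j" | j where "j < length W'" "x = \<alpha> (W' ! j)"
    using x(1) unfolding boundary_eq by (auto simp: in_set_conv_nth)
  then show "x \<in> {\<alpha> (W ! i), W ! succ i}"
  proof cases
    case (1 j)
    then show ?thesis using x(2) vtx_nth_eq_iff succ_less by auto
  next
    case (2 j)
    then have "succ j = succ i" using x(2) vtx_succ vtx_nth_eq_iff succ_less by metis
    then show ?thesis using 2 i add_one_mod_inj by auto
  next
    case (3 j)
    then show ?thesis using x(2) vtx_nth_neq succ_less by metis
  next
    case (4 j)
    then show ?thesis using x(2) vtx_succ' vtx_nth_neq succ_less closed'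
      unfolding closed_walk_def by (metis mod_less_divisor length_greater_0_conv)
  qed
next
  fix x assume "x \<in> {\<alpha> (W ! i), W ! succ i}"
  then show "x \<in> Bd \<inter> vtx \<sigma> (\<alpha> (W ! i))"
    using i succ_less[of i] succ_in_vtx[OF i] vtx_self[where f = \<sigma>] unfolding boundary_eq by auto
qed

lemma corner_at_inner_turn:
  "i < length W \<Longrightarrow> W ! i \<in> F \<Longrightarrow> corner (\<alpha> (W ! i)) (lturn \<alpha> \<phi> (W ! i) (W ! succ i))"
  by (rule corner_of_left_turn) (use boundary_at_turn succ_in_vtx no_bad_turn boundary_eq in auto)

lemma corner_at_outer_turn:
  "i < length W \<Longrightarrow> W ! i \<notin> F \<Longrightarrow> corner (W ! succ i) (rturn \<alpha> \<phi> (W ! i) (W ! succ i))"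
  by (rule corner_of_right_turn) (use boundary_at_turn succ_in_vtx no_bad_turn boundary_eq in auto)

lemma turn_vertex_corner:
  assumes "i < length W"
  shows "\<exists>a m. corner a m \<and> vtx \<sigma> a = vtx \<sigma> (\<alpha> (W ! i))"
  using corner_at_inner_turn[OF assms] corner_at_outer_turn[OF assms] vtx_succ[OF assms]
  by (cases "W ! i \<in> F") blast+

lemma walk_vertex_corner:
  assumes "x \<in> set W \<union> \<alpha> ` set W"
  shows "\<exists>a m. corner a m \<and> vtx \<sigma> a = vtx \<sigma> x"
proof -
  have "\<exists>i < length W. vtx \<sigma> x = vtx \<sigma> (\<alpha> (W ! i))"
  proof (cases "x \<in> set W")
    case True
    then obtain j where j: "j < length W" "x = W ! j" by (auto simp: in_set_conv_nth)
    define i where "i = (if j = 0 then length W - 1 else j - 1)"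
    have "i < length W" "succ i = j" unfolding i_def using j(1) by auto
    then show ?thesis using vtx_succ j(2) by metis
  next
    case False
    with assms show ?thesis by (auto simp: in_set_conv_nth)
  qed
  then show ?thesis using turn_vertex_corner by metis
qed

end


locale flat_boundary_walk = flat_region + boundary_walk
begin

lemma inner_turn:
  assumes "i < length W" "W ! i \<in> F"
  shows "lturn \<alpha> \<phi> (W ! i) (W ! succ i) = 3" and "W ! succ i \<in> F"
    and "col (W ! succ i) = col (W ! i)"
proof -
  let ?e = "W ! i" and ?k = "lturn \<alpha> \<phi> (W ! i) (W ! succ i)"
  have corner: "corner (\<alpha> ?e) ?k" by (rule corner_at_inner_turn[OF assms])
  then have k: "?k = 3" by (rule corner_eq_3)
  then show "?k = 3" .
  have succ: "W ! succ i = (\<sigma> ^^ 3) (\<alpha> ?e)"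
    using lturn_spec(1)[OF succ_in_vtx[OF assms(1)]] k by simp
  then show "W ! succ i \<in> F" using corner_last_in_F_boundary[OF corner] k by simp
  have "col ((\<sigma> ^^ 3) (\<alpha> ?e)) = col (\<sigma> (\<alpha> ?e))" by (simp add: col_funpow_sigma)
  then show "col (W ! succ i) = col ?e" using succ by (simp add: sigma_apply)
qed

lemma outer_turn:
  assumes "i < length W" "W ! i \<notin> F"
  shows "rturn \<alpha> \<phi> (W ! i) (W ! succ i) = 3" and "W ! succ i \<notin> F"
    and "col (W ! succ i) = col (W ! i)"
proof -
  let ?e = "W ! i" and ?e' = "W ! succ i"
  have corner: "corner ?e' (rturn \<alpha> \<phi> ?e ?e')" by (rule corner_at_outer_turn[OF assms])
  then have r: "rturn \<alpha> \<phi> ?e ?e' = 3" by (rule corner_eq_3)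
  then show "rturn \<alpha> \<phi> ?e ?e' = 3" .
  show "?e' \<notin> F" using corner unfolding corner_def by simp
  have "(\<sigma> ^^ 3) ?e' = \<alpha> ?e" using rturn_spec[OF succ_in_vtx[OF assms(1)]] r by simp
  then have "col (\<alpha> ?e) = col (\<sigma> ?e')" using col_funpow_sigma[of 3 ?e'] by simp
  then show "col ?e' = col ?e" using col_sigma[of ?e'] col_alpha[of ?e]
    by (cases "col ?e"; cases "col ?e'"; cases "col (\<sigma> ?e')") auto
qed

lemma walk_uniform:
  "i < length W \<Longrightarrow> (W ! i \<in> F \<longleftrightarrow> W ! 0 \<in> F) \<and> col (W ! i) = col (W ! 0)"
proof (induction i)
  case (Suc i)
  then have "succ i = Suc i" by simp
  with Suc inner_turn[of i] outer_turn[of i] show ?case by (cases "W ! i \<in> F") auto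
qed simp

lemma inner_walk_turn_3r:
  assumes "W ! 0 \<in> F" "i < length W"
  shows "turn_3r \<alpha> \<phi> col (W ! i) (W ! succ i) \<longleftrightarrow> col (W ! 0) = Red"
  using walk_uniform[OF assms(2)] inner_turn[OF assms(2)] assms(1) unfolding turn_3r_def by auto

lemma outer_walk_turn_m3b:
  assumes "W ! 0 \<notin> F" "i < length W"
  shows "turn_m3b \<alpha> \<phi> col (W ! i) (W ! succ i) \<longleftrightarrow> col (W ! 0) = Blue"
proof -
  have "rturn \<alpha> \<phi> (W ! i) (W ! succ i) = 3" "col (W ! i) = col (W ! 0)"
    using walk_uniform[OF assms(2)] outer_turn[OF assms(2)] assms(1) by auto
  moreover have "lturn \<alpha> \<phi> (W ! i) (W ! succ i) \<noteq> 0"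
    using calculation(1) deg_ge_8[of "\<alpha> (W ! i)"] unfolding rturn_def by auto
  ultimately show ?thesis unfolding turn_m3b_def by simp
qed

lemma reduced_walk_blue:
  assumes not_3r: "\<not> (\<forall>i<length W. turn_3r \<alpha> \<phi> col (W ! i) (W ! succ i))"
    and not_m3b: "\<not> (\<forall>i<length W. turn_m3b \<alpha> \<phi> col (W ! i) (W ! succ i))"
    and b: "b \<in> F" "b \<in> set W \<union> \<alpha> ` set W"
  shows "col b = Blue"
proof (cases "W ! 0 \<in> F")
  case True
  then have "col (W ! 0) \<noteq> Red" using not_3r inner_walk_turn_3r by blast
  moreover have "b \<in> set W"
  proof (rule ccontr)
    assume "b \<notin> set W"
    then obtain j where j: "j < length W" "b = \<alpha> (W ! j)" using b(2) by (auto simp: in_set_conv_nth)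
    then have "W ! j \<in> F \<inter> Bd" using walk_uniform True unfolding boundary_eq by auto
    with j b(1) show False using boundary_alpha_in_F_iff by auto
  qed
  ultimately show ?thesis using walk_uniform
    by (auto simp: in_set_conv_nth) (metis color.exhaust)
next
  case False
  then have "col (W ! 0) \<noteq> Blue" using not_m3b outer_walk_turn_m3b by blast
  moreover obtain j where j: "j < length W" "b = \<alpha> (W ! j)"
    using b walk_uniform False by (auto simp: in_set_conv_nth)
  ultimately show ?thesis using walk_uniform[OF j(1)] col_alpha[of "W ! j"]
    by (cases "col (W ! 0)"; cases "col b") auto
qed

end

text \<open>The hypotheses of the theorem with reducedness weakened to the absence of bad turns: then
  one of the two uniform turn patterns excluded by reducedness is forced.\<close>

locale annulus = region +
  fixes C C' :: "'a list"
  assumes closed: "closed_walk \<alpha> \<phi> C" "closed_walk \<alpha> \<phi> C'"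
    and simple: "simple_walk \<alpha> \<phi> C" "simple_walk \<alpha> \<phi> C'"
    and disjoint: "disjoint_walks \<alpha> \<phi> C C'"
    and boundary_eq: "Bd = set C \<union> \<alpha> ` set C \<union> set C' \<union> \<alpha> ` set C'"
    and euler: "int (card (vtx \<sigma> ` F)) - int (card (edge ` F)) + int (card (tri ` F)) = 0"
    and no_bad_turn:
      "\<forall>i<length C. \<not> bad_turn \<alpha> \<phi> col (C ! i) (C ! ((i + 1) mod length C))"
      "\<forall>i<length C'. \<not> bad_turn \<alpha> \<phi> col (C' ! i) (C' ! ((i + 1) mod length C'))"
begin

lemma boundary_walk_C: "boundary_walk \<alpha> \<phi> col F Bd C C'"
  by (intro boundary_walk.intro region_axioms boundary_walk_axioms.intro)
    (use closed simple disjoint boundary_eq no_bad_turn in auto)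

lemma boundary_walk_C': "boundary_walk \<alpha> \<phi> col F Bd C' C"
proof (intro boundary_walk.intro region_axioms boundary_walk_axioms.intro)
  show "disjoint_walks \<alpha> \<phi> C' C" using disjoint unfolding disjoint_walks_def by metis
  show "Bd = set C' \<union> \<alpha> ` set C' \<union> set C \<union> \<alpha> ` set C" using boundary_eq by blast
qed (use closed simple no_bad_turn in auto)

sublocale flat_region
proof
  fix d assume "d \<in> F" "Bd \<inter> vtx \<sigma> d \<noteq> {}"
  then obtain x where x: "x \<in> Bd" "x \<in> vtx \<sigma> d" by blast
  then have "vtx \<sigma> x = vtx \<sigma> d" by (simp only: vtx_sigma_eq_iff)
  moreover have "\<exists>a m. corner a m \<and> vtx \<sigma> a = vtx \<sigma> x"
    using x(1) boundary_walk.walk_vertex_corner[OF boundary_walk_C]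
      boundary_walk.walk_vertex_corner[OF boundary_walk_C'] unfolding boundary_eq by blast
  ultimately show "\<exists>a m. corner a m \<and> vtx \<sigma> a = vtx \<sigma> d" by auto
qed (rule euler)

sublocale C: flat_boundary_walk \<alpha> \<phi> col F Bd C C'
  by (intro flat_boundary_walk.intro flat_region_axioms boundary_walk_C)

sublocale C': flat_boundary_walk \<alpha> \<phi> col F Bd C' C
  by (intro flat_boundary_walk.intro flat_region_axioms boundary_walk_C')

lemma uniform_boundary_turns:
  "(\<forall>i<length C. turn_3r \<alpha> \<phi> col (C ! i) (C ! C.succ i)) \<or>
   (\<forall>i<length C. turn_m3b \<alpha> \<phi> col (C ! i) (C ! C.succ i)) \<or>
   (\<forall>i<length C'. turn_3r \<alpha> \<phi> col (C' ! i) (C' ! C'.succ i)) \<or>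
   (\<forall>i<length C'. turn_m3b \<alpha> \<phi> col (C' ! i) (C' ! C'.succ i))"
proof (rule ccontr)
  assume "\<not> ?thesis"
  then have "col b = Blue" if "b \<in> F \<inter> Bd" for b
    using that C.reduced_walk_blue C'.reduced_walk_blue unfolding boundary_eq by blast
  moreover have "F \<noteq> {}"
  proof
    assume "F = {}"
    moreover have "C ! 0 \<in> Bd" using closed(1) unfolding closed_walk_def boundary_eq by auto
    ultimately show False using boundary_iff by auto
  qed
  ultimately show False using red_boundary_dart by fastforce
qed

end

theorem lemma3p6:
  fixes alpha phi :: "'d \<Rightarrow> 'd" and col :: "'d \<Rightarrow> color" and C C' :: "'d list"
  assumes "reducing_triangulation alpha phi col"
    and "closed_walk alpha phi C" and "simple_walk alpha phi C"
    and "closed_walk alpha phi C'" and "simple_walk alpha phi C'"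
    and "disjoint_walks alpha phi C C'"
    and "bound_annulus alpha phi C C'"
  shows "\<not> (reduced_closed_walk alpha phi col C \<and> reduced_closed_walk alpha phi col C')"
proof
  assume reduced: "reduced_closed_walk alpha phi col C \<and> reduced_closed_walk alpha phi col C'"
  obtain F where F: "finite F" "\<forall>d\<in>F. phi d \<in> F"
    "\<forall>x. ((x \<in> F) \<longleftrightarrow> (alpha x \<notin> F)) \<longleftrightarrow> x \<in> set C \<union> alpha ` set C \<union> set C' \<union> alpha ` set C'"
    and euler: "int (card (vtx (rot alpha phi) ` F)) - int (card ((\<lambda>d. {d, alpha d}) ` F))
       + int (card ((\<lambda>d. {d, phi d, phi (phi d)}) ` F)) = 0"
    using assms(7) unfolding bound_annulus_def by blast
  define Bd where "Bd = set C \<union> alpha ` set C \<union> set C' \<union> alpha ` set C'"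
  interpret annulus alpha phi col F Bd C C'
  proof (unfold_locales)
    show "x \<in> Bd \<longleftrightarrow> (x \<in> F \<longleftrightarrow> alpha x \<notin> F)" for x
      unfolding Bd_def by (rule sym[OF F(3)[rule_format]])
  qed (use assms F euler reduced in \<open>simp_all add: Bd_def reduced_closed_walk_def\<close>)
  show False using uniform_boundary_turns reduced unfolding reduced_closed_walk_def by blast
qed

end
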